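(* Let $\mathcal H=(M,n,\mathcal R)$ be a BMS, $x_0\in\mathbb R^n$ and $\gamma>0$. There exists an $\mathcal H$-closed convex polytope $P$ with $x_0\in P\subseteq \{y\in\mathbb R^n:\|y-x_0\|\le\gamma\}$ if and only if for every vector $v\in\mathbb R^n$ there is a mode $m\in M$ such that $v\cdot r\ge 0$ for all $r\in\mathcal R(m)$.
   Context: A multi-mode system is a tuple $\mathcal H=(M,n,\mathcal R)$ with $M$ a finite nonempty set of modes, $n\ge1$ variables, and $\mathcal R:M\to 2^{\mathbb R^n}$ giving nonempty rate sets; it is a BMS if each $\mathcal R(m)$ is a bounded convex polytope. A convex polytope $P\subseteq\mathbb R^n$ is $\mathcal H$-closed if for every vertex $c$ of $P$ there exist a mode $m\in M$ and $\tau>0$ such that $c+t\,r\in P$ for all $r\in\mathcal R(m)$ and all $t\in[0,\tau]$. $\|\cdot\|$ is the Euclidean norm and $\cdot$ the standard dot product. *)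

theory Defs
  imports "HOL-Analysis.Analysis"
begin

text \<open>A multi-mode system with mode set M (finite, nonempty) and rate sets R m in R^n
  (n = CARD('n)).\<close>
definition BMS :: "'m set \<Rightarrow> ('m \<Rightarrow> (real^'n) set) \<Rightarrow> bool" where
  "BMS M R \<longleftrightarrow> finite M \<and> M \<noteq> {} \<and> (\<forall>m\<in>M. R m \<noteq> {} \<and> polytope (R m))"

definition H_closed :: "'m set \<Rightarrow> ('m \<Rightarrow> (real^'n) set) \<Rightarrow> (real^'n) set \<Rightarrow> bool" where
  "H_closed M R P \<longleftrightarrow>
     (\<forall>c. c extreme_point_of P \<longrightarrow>
        (\<exists>m\<in>M. \<exists>\<tau>>0. \<forall>r\<in>R m. \<forall>t\<in>{0..\<tau>}. c + t *\<^sub>R r \<in> P))"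

end

theory Submission
  imports Defs
begin

text \<open>Necessity: \<open>v \<bullet> _\<close> attains its minimum over the polytope at a vertex \<open>c\<close>, and a mode
  that keeps \<open>c\<close> inside the polytope for a short time cannot decrease \<open>v \<bullet> _\<close>.
  Sufficiency: take the zonotope spanned around \<open>x0\<close> by all (small multiples of) vertices \<open>g\<close>
  of all rate sets. A vertex \<open>c\<close> of the zonotope is exposed by some \<open>a\<close>; every generator with
  \<open>a \<bullet> g \<le> 0\<close> must enter \<open>c\<close> with sign \<open>-1\<close>, so \<open>c + 2g\<close> is again a corner. Choosing the mode
  for \<open>v = -a\<close> makes all its vertices such generators, and convexity does the rest.\<close>

lemma polytope_inner_minimum_at_extreme_point:
  fixes P :: "'a::euclidean_space set"
  assumes "polytope P" "P \<noteq> {}"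
  obtains c where "c extreme_point_of P" "\<And>x. x \<in> P \<Longrightarrow> v \<bullet> c \<le> v \<bullet> x"
proof -
  define E where "E = {x. x extreme_point_of P}"
  have P_eq: "P = convex hull E"
    using assms(1) Krein_Milman_polytope unfolding E_def polytope_def by blast
  have "finite E"
    unfolding E_def using assms(1) by (simp add: finite_polyhedron_extreme_points polytope_imp_polyhedron)
  moreover have "E \<noteq> {}" using assms(2) P_eq by auto
  ultimately obtain c where c: "c \<in> E" "\<And>e. e \<in> E \<Longrightarrow> v \<bullet> c \<le> v \<bullet> e"
    using ex_is_arg_min_if_finite[of E "(\<bullet>) v"] by (auto simp: is_arg_min_linorder)
  have "P \<subseteq> {x. v \<bullet> c \<le> v \<bullet> x}"
    unfolding P_eq by (rule hull_minimal) (use c(2) convex_halfspace_ge in auto)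
  then show thesis using that c(1) unfolding E_def by blast
qed

lemma convex_contains_convex_hull_directions:
  fixes P :: "'a::real_vector set"
  assumes "convex P" "c \<in> P" "\<tau> > 0" "\<And>g. g \<in> V \<Longrightarrow> c + \<tau> *\<^sub>R g \<in> P"
    and "r \<in> convex hull V" "t \<in> {0..\<tau>}"
  shows "c + t *\<^sub>R r \<in> P"
proof -
  have "c + t *\<^sub>R g \<in> P" if "g \<in> V" for g
  proof -
    define u where "u = t / \<tau>"
    have "0 \<le> u" "u \<le> 1" unfolding u_def using assms(3,6) by auto
    then have "(1 - u) *\<^sub>R c + u *\<^sub>R (c + \<tau> *\<^sub>R g) \<in> P"
      using assms(1,2,4) that by (simp add: convex_def)
    moreover have "(1 - u) *\<^sub>R c + u *\<^sub>R (c + \<tau> *\<^sub>R g) = c + t *\<^sub>R g"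
      unfolding u_def using assms(3) by (simp add: algebra_simps)
    ultimately show ?thesis by simp
  qed
  then have "convex hull ((\<lambda>g. c + t *\<^sub>R g) ` V) \<subseteq> P"
    using assms(1) by (intro hull_minimal) auto
  then show ?thesis
    using assms(5) by (auto simp: convex_hull_affinity)
qed

definition zonotope_corners :: "'a::real_vector \<Rightarrow> 'a set \<Rightarrow> 'a set" where
  "zonotope_corners x0 G = (\<lambda>\<sigma>. x0 + (\<Sum>g\<in>G. \<sigma> g *\<^sub>R g)) ` (G \<rightarrow>\<^sub>E {-1, 1})"

definition zonotope :: "'a::real_vector \<Rightarrow> 'a set \<Rightarrow> 'a set" where
  "zonotope x0 G = convex hull (zonotope_corners x0 G)"

lemma polytope_zonotope:
  fixes G :: "'a::euclidean_space set"
  assumes "finite G"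
  shows "polytope (zonotope x0 G)"
  unfolding polytope_def zonotope_def
  by (intro exI[of _ "zonotope_corners x0 G"]) (simp add: zonotope_corners_def finite_PiE assms)

lemma zonotope_corners_subset_zonotope: "zonotope_corners x0 G \<subseteq> zonotope x0 G"
  unfolding zonotope_def by (rule hull_subset)

lemma center_in_zonotope: "x0 \<in> zonotope x0 G"
proof -
  let ?s = "\<Sum>g\<in>G. g"
  have "restrict (\<lambda>_. 1) G \<in> G \<rightarrow>\<^sub>E {-1, 1}" "restrict (\<lambda>_. -1) G \<in> G \<rightarrow>\<^sub>E {-1, 1}"
    by auto
  then have "x0 + (\<Sum>g\<in>G. restrict (\<lambda>_. 1) G g *\<^sub>R g) \<in> zonotope_corners x0 G"
    "x0 + (\<Sum>g\<in>G. restrict (\<lambda>_. -1) G g *\<^sub>R g) \<in> zonotope_corners x0 G"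
    unfolding zonotope_corners_def by (blast intro: imageI)+
  then have "x0 + ?s \<in> zonotope x0 G" "x0 - ?s \<in> zonotope x0 G"
    using zonotope_corners_subset_zonotope by (auto simp: sum_negf)
  then have "midpoint (x0 + ?s) (x0 - ?s) \<in> zonotope x0 G"
    using closed_segment_subset[of _ "zonotope x0 G"] midpoint_in_closed_segment
    unfolding zonotope_def by (meson convex_convex_hull subsetD)
  then show ?thesis by (simp add: midpoint_eq_iff[of _ _ x0, THEN iffD2])
qed

lemma zonotope_subset_cball:
  fixes G :: "'a::real_normed_vector set"
  shows "zonotope x0 G \<subseteq> cball x0 (\<Sum>g\<in>G. norm g)"
  unfolding zonotope_def
proof (intro hull_minimal subsetI)
  fix y assume "y \<in> zonotope_corners x0 G"
  then obtain \<sigma> where \<sigma>: "\<sigma> \<in> G \<rightarrow>\<^sub>E {-1, 1}" "y = x0 + (\<Sum>g\<in>G. \<sigma> g *\<^sub>R g)"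
    unfolding zonotope_corners_def by blast
  have "norm (\<Sum>g\<in>G. \<sigma> g *\<^sub>R g) \<le> (\<Sum>g\<in>G. norm (\<sigma> g *\<^sub>R g))" by (rule norm_sum)
  also have "\<dots> = (\<Sum>g\<in>G. norm g)"
    by (rule sum.cong) (use \<sigma>(1) in \<open>auto simp: PiE_def Pi_def\<close>)
  finally show "y \<in> cball x0 (\<Sum>g\<in>G. norm g)" using \<sigma>(2) by (simp add: dist_norm)
qed (simp add: convex_cball)

lemma zonotope_scaleR_subset_cball:
  fixes G :: "'a::real_normed_vector set"
  assumes "\<epsilon> > 0"
  shows "zonotope x0 ((*\<^sub>R) \<epsilon> ` G) \<subseteq> cball x0 (\<epsilon> * (\<Sum>g\<in>G. norm g))"
proof -
  have "(\<Sum>g\<in>(*\<^sub>R) \<epsilon> ` G. norm g) = \<epsilon> * (\<Sum>g\<in>G. norm g)"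
    using assms by (simp add: sum.reindex inj_on_def sum_distrib_left)
  then show ?thesis using zonotope_subset_cball by metis
qed

lemma flip_in_zonotope_corners:
  assumes "finite G" "\<sigma> \<in> G \<rightarrow>\<^sub>E {-1, 1}" "g \<in> G" "s \<in> {-1, 1}"
  shows "x0 + (\<Sum>h\<in>G. \<sigma> h *\<^sub>R h) + (s - \<sigma> g) *\<^sub>R g \<in> zonotope_corners x0 G"
proof -
  let ?rest = "\<Sum>h\<in>G - {g}. \<sigma> h *\<^sub>R h"
  have "(\<Sum>h\<in>G. (\<sigma>(g := s)) h *\<^sub>R h) = s *\<^sub>R g + (\<Sum>h\<in>G - {g}. (\<sigma>(g := s)) h *\<^sub>R h)"
    using sum.remove[OF assms(1,3), of "\<lambda>h. (\<sigma>(g := s)) h *\<^sub>R h"] by simp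
  also have "(\<Sum>h\<in>G - {g}. (\<sigma>(g := s)) h *\<^sub>R h) = ?rest"
    by (rule sum.cong) auto
  also have "s *\<^sub>R g + ?rest = (\<sigma> g *\<^sub>R g + ?rest) + (s - \<sigma> g) *\<^sub>R g"
    by (simp add: algebra_simps)
  also have "\<sigma> g *\<^sub>R g + ?rest = (\<Sum>h\<in>G. \<sigma> h *\<^sub>R h)"
    using sum.remove[OF assms(1,3), of "\<lambda>h. \<sigma> h *\<^sub>R h"] by simp
  finally have "x0 + (\<Sum>h\<in>G. \<sigma> h *\<^sub>R h) + (s - \<sigma> g) *\<^sub>R g = x0 + (\<Sum>h\<in>G. (\<sigma>(g := s)) h *\<^sub>R h)"
    by (simp add: add.assoc)
  moreover have "\<sigma>(g := s) \<in> G \<rightarrow>\<^sub>E {-1, 1}"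
    using assms(2-4) by (auto simp: PiE_def extensional_def Pi_def)
  ultimately show ?thesis unfolding zonotope_corners_def by (rule image_eqI)
qed

lemma extreme_point_of_zonotope_add_generators:
  fixes G :: "'a::euclidean_space set"
  assumes "finite G" "c extreme_point_of zonotope x0 G"
  obtains a where "\<And>g. g \<in> G \<Longrightarrow> a \<bullet> g \<le> 0 \<Longrightarrow> c + 2 *\<^sub>R g \<in> zonotope x0 G"
proof -
  let ?Z = "zonotope x0 G"
  have "{c} exposed_face_of ?Z"
    using assms polytope_zonotope exposed_face_of_polyhedron polytope_imp_polyhedron face_of_singleton
    by blast
  then obtain a b where ab: "?Z \<subseteq> {x. a \<bullet> x \<le> b}" "{c} = ?Z \<inter> {x. a \<bullet> x = b}"
    unfolding exposed_face_of_def by blast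
  have "c \<in> zonotope_corners x0 G"
    using assms(2) unfolding zonotope_def by (rule extreme_point_of_convex_hull)
  then obtain \<sigma> where \<sigma>: "\<sigma> \<in> G \<rightarrow>\<^sub>E {-1, 1}" "c = x0 + (\<Sum>h\<in>G. \<sigma> h *\<^sub>R h)"
    unfolding zonotope_corners_def by blast
  have flip: "c + (s - \<sigma> g) *\<^sub>R g \<in> ?Z" if "g \<in> G" "s \<in> {-1, 1}" for g s
    using flip_in_zonotope_corners[OF assms(1) \<sigma>(1) that] zonotope_corners_subset_zonotope \<sigma>(2)
    by blast
  have "c + 2 *\<^sub>R g \<in> ?Z" if g: "g \<in> G" "a \<bullet> g \<le> 0" for g
  proof (cases "g = 0")
    case True
    then show ?thesis using ab(2) by auto
  next
    case False
    have "\<sigma> g = -1"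
    proof (rule ccontr)
      assume "\<sigma> g \<noteq> -1"
      then have "\<sigma> g = 1" using \<sigma>(1) g(1) by auto
      then have c': "c - 2 *\<^sub>R g \<in> ?Z" using flip[OF g(1), of "-1"] by simp
      \<comment> \<open>since \<open>a \<bullet> g \<le> 0\<close>, the point \<open>c - 2g\<close> also lies on the exposing hyperplane\<close>
      have "a \<bullet> (c - 2 *\<^sub>R g) = b"
        using ab c' g(2) by (force simp: inner_diff_right)
      then have "c - 2 *\<^sub>R g = c" using ab(2) c' by blast
      then show False using False by simp
    qed
    then show ?thesis using flip[OF g(1), of 1] by simp
  qed
  then show thesis by (rule that)
qed

lemma H_closed_zonotope:
  fixes R :: "'m \<Rightarrow> (real^'n) set"
  assumes "finite G" "\<epsilon> > 0"
    and V: "\<And>m. m \<in> M \<Longrightarrow> R m = convex hull (V m) \<and> V m \<subseteq> G"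
    and modes: "\<forall>v. \<exists>m\<in>M. \<forall>r\<in>R m. v \<bullet> r \<ge> 0"
  shows "H_closed M R (zonotope x0 ((*\<^sub>R) \<epsilon> ` G))"
  unfolding H_closed_def
proof (intro allI impI)
  let ?Z = "zonotope x0 ((*\<^sub>R) \<epsilon> ` G)"
  fix c assume c: "c extreme_point_of ?Z"
  then obtain a where advance: "\<And>g. g \<in> (*\<^sub>R) \<epsilon> ` G \<Longrightarrow> a \<bullet> g \<le> 0 \<Longrightarrow> c + 2 *\<^sub>R g \<in> ?Z"
    using extreme_point_of_zonotope_add_generators assms(1) by blast
  obtain m where m: "m \<in> M" "\<forall>r\<in>R m. (- a) \<bullet> r \<ge> 0" using modes by blast
  have "c + (2 * \<epsilon>) *\<^sub>R g \<in> ?Z" if "g \<in> V m" for g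
  proof -
    have "g \<in> R m" using V[OF m(1)] that hull_inc by metis
    then have "a \<bullet> (\<epsilon> *\<^sub>R g) \<le> 0" using m(2) assms(2) by (simp add: mult_nonneg_nonpos)
    then show ?thesis using advance[of "\<epsilon> *\<^sub>R g"] V[OF m(1)] that by auto
  qed
  moreover have "c \<in> ?Z" using c extreme_point_of_def by blast
  ultimately have "\<forall>r\<in>R m. \<forall>t\<in>{0..2 * \<epsilon>}. c + t *\<^sub>R r \<in> ?Z"
    using V[OF m(1)] assms(2) convex_contains_convex_hull_directions[of ?Z c "2 * \<epsilon>" "V m"]
    unfolding zonotope_def by auto
  then show "\<exists>m\<in>M. \<exists>\<tau>>0. \<forall>r\<in>R m. \<forall>t\<in>{0..\<tau>}. c + t *\<^sub>R r \<in> ?Z"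
    using m(1) assms(2) by (intro bexI[of _ m] exI[of _ "2 * \<epsilon>"]) auto
qed

lemma H_closed_polytope_nonneg_mode:
  fixes R :: "'m \<Rightarrow> (real^'n) set"
  assumes "polytope P" "P \<noteq> {}" "H_closed M R P"
  shows "\<exists>m\<in>M. \<forall>r\<in>R m. v \<bullet> r \<ge> 0"
proof -
  obtain c where c: "c extreme_point_of P" "\<And>x. x \<in> P \<Longrightarrow> v \<bullet> c \<le> v \<bullet> x"
    using polytope_inner_minimum_at_extreme_point assms(1,2) by blast
  then obtain m \<tau> where m: "m \<in> M" "\<tau> > 0" "\<forall>r\<in>R m. c + \<tau> *\<^sub>R r \<in> P"
    using assms(3) unfolding H_closed_def by (meson atLeastAtMost_iff less_imp_le order_refl)
  have "v \<bullet> r \<ge> 0" if "r \<in> R m" for r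
    using c(2)[of "c + \<tau> *\<^sub>R r"] m(2,3) that by (simp add: inner_add_right zero_le_mult_iff)
  then show ?thesis using m(1) by blast
qed

theorem lemma1:
  fixes M :: "'m set" and R :: "'m \<Rightarrow> (real^'n) set" and x0 :: "real^'n" and \<gamma> :: real
  assumes "BMS M R" and "\<gamma> > 0"
  shows "(\<exists>P. polytope P \<and> H_closed M R P \<and> x0 \<in> P \<and> P \<subseteq> cball x0 \<gamma>) \<longleftrightarrow>
         (\<forall>v::real^'n. \<exists>m\<in>M. \<forall>r\<in>R m. v \<bullet> r \<ge> 0)"
proof
  assume "\<exists>P. polytope P \<and> H_closed M R P \<and> x0 \<in> P \<and> P \<subseteq> cball x0 \<gamma>"
  then show "\<forall>v::real^'n. \<exists>m\<in>M. \<forall>r\<in>R m. v \<bullet> r \<ge> 0"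
    using H_closed_polytope_nonneg_mode by blast
next
  assume modes: "\<forall>v::real^'n. \<exists>m\<in>M. \<forall>r\<in>R m. v \<bullet> r \<ge> 0"
  obtain V where V: "\<And>m. m \<in> M \<Longrightarrow> finite (V m) \<and> R m = convex hull (V m)"
    using assms(1) unfolding BMS_def polytope_def by metis
  define G where "G = (\<Union>m\<in>M. V m)"
  have "finite G" unfolding G_def using assms(1) V by (simp add: BMS_def)
  define K where "K = (\<Sum>g\<in>G. norm g)"
  define \<epsilon> where "\<epsilon> = \<gamma> / (1 + K)"
  define P where "P = zonotope x0 ((*\<^sub>R) \<epsilon> ` G)"
  have "K \<ge> 0" unfolding K_def by (simp add: sum_nonneg)
  then have "\<epsilon> > 0" "\<epsilon> * K \<le> \<gamma>"
    unfolding \<epsilon>_def using assms(2) by (simp_all add: field_simps)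
  then have "P \<subseteq> cball x0 \<gamma>"
    unfolding P_def K_def using zonotope_scaleR_subset_cball subset_cball by blast
  moreover have "H_closed M R P"
    unfolding P_def using \<open>finite G\<close> \<open>\<epsilon> > 0\<close> V modes
    by (intro H_closed_zonotope) (auto simp: G_def)
  moreover have "polytope P" "x0 \<in> P"
    unfolding P_def using \<open>finite G\<close> by (simp_all add: polytope_zonotope center_in_zonotope)
  ultimately show "\<exists>P. polytope P \<and> H_closed M R P \<and> x0 \<in> P \<and> P \<subseteq> cball x0 \<gamma>"
    by blast
qed

end
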